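(* The balanced elements $g\in G(e,e,n)$ with $\ell(g)=n(n-1)$ (the maximal length) are exactly the elements $\lambda^k$ with $1\le k\le e-1$.
   Context: Let $e\ge 2$, $n\ge 2$, $\zeta_e=e^{2\pi i/e}$. $G(e,e,n)$ is the group of $n\times n$ monomial matrices with nonzero entries $e$-th roots of unity whose product is $1$. For $i\in\mathbb{Z}/e\mathbb{Z}$, $t_i$ is the matrix with $(1,2)$ entry $\zeta_e^{-i}$, $(2,1)$ entry $\zeta_e^{i}$, $(j,j)$ entry $1$ for $3\le j\le n$, other entries $0$; for $3\le j\le n$, $s_j$ is the permutation matrix of the transposition $(j-1\ j)$. $X=\{t_0,\dots,t_{e-1},s_3,\dots,s_n\}$ and $\ell$ is the word length with respect to $X$. For $u,w\in G(e,e,n)$ write $u\preceq w$ if $\ell(u)+\ell(u^{-1}w)=\ell(w)$, and $u\preceq_r w$ if $\ell(wu^{-1})+\ell(u)=\ell(w)$. For $g$, $[1,g]=\{w: w\preceq g\}$, $[1,g]_r=\{w: w\preceq_r g\}$; $g$ is balanced if $[1,g]=[1,g]_r$. $\lambda=\mathrm{diag}(\zeta_e^{-(n-1)},\zeta_e,\dots,\zeta_e)$. *)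

theory Defs
  imports Complex_Main
begin

text \<open>Matrices of size n are represented as functions nat \<Rightarrow> nat \<Rightarrow> complex,
  indices in {1..n}, and entries outside {1..n} x {1..n} equal to 0.\<close>

type_synonym cmat = "nat \<Rightarrow> nat \<Rightarrow> complex"

definition zeta :: "nat \<Rightarrow> complex" where
  "zeta e = cis (2 * pi / real e)"

definition mmult :: "nat \<Rightarrow> cmat \<Rightarrow> cmat \<Rightarrow> cmat" where
  "mmult n A B = (\<lambda>i j. if i \<in> {1..n} \<and> j \<in> {1..n} then (\<Sum>k\<in>{1..n}. A i k * B k j) else 0)"

definition mone :: "nat \<Rightarrow> cmat" where
  "mone n = (\<lambda>i j. if i \<in> {1..n} \<and> i = j then 1 else 0)"

definition mpow :: "nat \<Rightarrow> cmat \<Rightarrow> nat \<Rightarrow> cmat" where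
  "mpow n A k = ((mmult n A) ^^ k) (mone n)"

definition Geen :: "nat \<Rightarrow> nat \<Rightarrow> cmat set" where
  "Geen e n = {A. (\<forall>i j. (i \<notin> {1..n} \<or> j \<notin> {1..n}) \<longrightarrow> A i j = 0) \<and>
     (\<exists>\<sigma>. bij_betw \<sigma> {1..n} {1..n} \<and>
        (\<forall>i\<in>{1..n}. \<forall>j\<in>{1..n}. A i j \<noteq> 0 \<longleftrightarrow> j = \<sigma> i) \<and>
        (\<forall>i\<in>{1..n}. (A i (\<sigma> i)) ^ e = 1) \<and>
        (\<Prod>i\<in>{1..n}. A i (\<sigma> i)) = 1)}"

definition gen_t :: "nat \<Rightarrow> nat \<Rightarrow> nat \<Rightarrow> cmat" where
  "gen_t e n i = (\<lambda>a b.
     if a = 1 \<and> b = 2 then inverse (zeta e ^ i)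
     else if a = 2 \<and> b = 1 then zeta e ^ i
     else if 3 \<le> a \<and> a \<le> n \<and> a = b then 1 else 0)"

definition gen_s :: "nat \<Rightarrow> nat \<Rightarrow> cmat" where
  "gen_s n j = (\<lambda>a b. if a \<in> {1..n} \<and> b \<in> {1..n} \<and> b = (if a = j - 1 then j else if a = j then j - 1 else a)
                       then 1 else 0)"

definition gens :: "nat \<Rightarrow> nat \<Rightarrow> cmat set" where
  "gens e n = {gen_t e n i | i. i < e} \<union> {gen_s n j | j. 3 \<le> j \<and> j \<le> n}"

definition wprod :: "nat \<Rightarrow> cmat list \<Rightarrow> cmat" where
  "wprod n ws = foldr (mmult n) ws (mone n)"

definition wlen :: "nat \<Rightarrow> nat \<Rightarrow> cmat \<Rightarrow> nat" where
  "wlen e n g = (LEAST k. \<exists>ws. set ws \<subseteq> gens e n \<and> length ws = k \<and> wprod n ws = g)"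

definition ginv :: "nat \<Rightarrow> nat \<Rightarrow> cmat \<Rightarrow> cmat" where
  "ginv e n u = (THE v. v \<in> Geen e n \<and> mmult n u v = mone n)"

definition prefix_le :: "nat \<Rightarrow> nat \<Rightarrow> cmat \<Rightarrow> cmat \<Rightarrow> bool" where
  "prefix_le e n u w \<longleftrightarrow> wlen e n u + wlen e n (mmult n (ginv e n u) w) = wlen e n w"

definition suffix_le :: "nat \<Rightarrow> nat \<Rightarrow> cmat \<Rightarrow> cmat \<Rightarrow> bool" where
  "suffix_le e n u w \<longleftrightarrow> wlen e n (mmult n w (ginv e n u)) + wlen e n u = wlen e n w"

definition interval_l :: "nat \<Rightarrow> nat \<Rightarrow> cmat \<Rightarrow> cmat set" where
  "interval_l e n g = {w \<in> Geen e n. prefix_le e n w g}"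

definition interval_r :: "nat \<Rightarrow> nat \<Rightarrow> cmat \<Rightarrow> cmat set" where
  "interval_r e n g = {w \<in> Geen e n. suffix_le e n w g}"

definition balanced :: "nat \<Rightarrow> nat \<Rightarrow> cmat \<Rightarrow> bool" where
  "balanced e n g \<longleftrightarrow> interval_l e n g = interval_r e n g"

definition lam :: "nat \<Rightarrow> nat \<Rightarrow> cmat" where
  "lam e n = (\<lambda>a b. if a = 1 \<and> b = 1 then inverse (zeta e ^ (n - 1))
                   else if 2 \<le> a \<and> a \<le> n \<and> a = b then zeta e else 0)"

end

theory Submission
  imports Defs
begin

text \<open>Every element of \<open>G(e,e,n)\<close> is a monomial matrix \<open>monomial n \<sigma> c\<close>, and its length is
  the explicit sum \<open>mono_len n \<sigma> c\<close> over pairs of rows: left multiplication by a generator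
  changes this sum by at most one, and every nonidentity element is shortened by some generator.
  The maximal value \<open>n(n-1)\<close> is attained exactly by the diagonal matrices whose coefficients in
  rows \<open>2..n\<close> are nontrivial roots of unity. If two consecutive such coefficients differ, a
  monomial matrix over the corresponding transposition is a left but not a right divisor, so a
  balanced element of maximal length is scalar \<open>\<zeta>\<^sup>k\<close> on rows \<open>2..n\<close>, i.e. equals \<open>\<lambda>\<^sup>k\<close>.
  Conversely, since \<open>\<lambda>\<^sup>k\<close> is scalar on rows \<open>2..n\<close>, its left and right quotients by any
  element have the same length.\<close>

section \<open>Monomial matrices\<close>

definition monomial :: "nat \<Rightarrow> (nat \<Rightarrow> nat) \<Rightarrow> (nat \<Rightarrow> complex) \<Rightarrow> cmat" where
  "monomial n \<sigma> c = (\<lambda>i j. if i \<in> {1..n} \<and> j \<in> {1..n} \<and> j = \<sigma> i then c i else 0)"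

definition monomial_data :: "nat \<Rightarrow> nat \<Rightarrow> (nat \<Rightarrow> nat) \<Rightarrow> (nat \<Rightarrow> complex) \<Rightarrow> bool" where
  "monomial_data e n \<sigma> c \<longleftrightarrow>
     bij_betw \<sigma> {1..n} {1..n} \<and> (\<forall>i\<in>{1..n}. c i ^ e = 1) \<and> (\<Prod>i\<in>{1..n}. c i) = 1"

lemma mmult_monomial:
  assumes "\<forall>i\<in>{1..n}. \<sigma> i \<in> {1..n}"
  shows "mmult n (monomial n \<sigma> c) (monomial n \<tau> d) = monomial n (\<tau> \<circ> \<sigma>) (\<lambda>i. c i * d (\<sigma> i))"
proof (rule ext, rule ext)
  fix i j
  show "mmult n (monomial n \<sigma> c) (monomial n \<tau> d) i j = monomial n (\<tau> \<circ> \<sigma>) (\<lambda>i. c i * d (\<sigma> i)) i j"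
  proof (cases "i \<in> {1..n} \<and> j \<in> {1..n}")
    case True
    have "(\<Sum>k\<in>{1..n}. monomial n \<sigma> c i k * monomial n \<tau> d k j)
        = (\<Sum>k\<in>{1..n}. if k = \<sigma> i then c i * (if j = \<tau> (\<sigma> i) then d (\<sigma> i) else 0) else 0)"
      by (rule sum.cong) (use True in \<open>auto simp: monomial_def\<close>)
    also have "\<dots> = c i * (if j = \<tau> (\<sigma> i) then d (\<sigma> i) else 0)"
      using assms True by (simp add: sum.delta)
    finally show ?thesis using True by (simp add: mmult_def monomial_def)
  qed (auto simp: mmult_def monomial_def)
qed

lemma mmult_assoc: "mmult n (mmult n A B) C = mmult n A (mmult n B C)"
proof (rule ext, rule ext)
  fix i j
  show "mmult n (mmult n A B) C i j = mmult n A (mmult n B C) i j"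
  proof (cases "i \<in> {1..n} \<and> j \<in> {1..n}")
    case True
    have "mmult n (mmult n A B) C i j = (\<Sum>k\<in>{1..n}. \<Sum>l\<in>{1..n}. A i l * B l k * C k j)"
      using True by (auto simp: mmult_def sum_distrib_right intro!: sum.cong)
    also have "\<dots> = (\<Sum>l\<in>{1..n}. \<Sum>k\<in>{1..n}. A i l * B l k * C k j)"
      by (rule sum.swap)
    also have "\<dots> = mmult n A (mmult n B C) i j"
      using True by (auto simp: mmult_def sum_distrib_left mult.assoc intro!: sum.cong)
    finally show ?thesis .
  qed (auto simp: mmult_def)
qed

lemma mone_eq_monomial: "mone n = monomial n id (\<lambda>_. 1)"
  by (auto simp: mone_def monomial_def fun_eq_iff)

lemma monomial_cong:
  assumes "\<forall>i\<in>{1..n}. \<sigma> i = \<sigma>' i \<and> c i = c' i"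
  shows "monomial n \<sigma> c = monomial n \<sigma>' c'"
  using assms by (auto simp: monomial_def fun_eq_iff)

lemma monomial_data_range: "monomial_data e n \<sigma> c \<Longrightarrow> \<forall>i\<in>{1..n}. \<sigma> i \<in> {1..n}"
  unfolding monomial_data_def bij_betw_def by blast

lemma monomial_data_inj: "monomial_data e n \<sigma> c \<Longrightarrow> inj_on \<sigma> {1..n}"
  unfolding monomial_data_def bij_betw_def by blast

lemma monomial_data_nonzero:
  assumes "monomial_data e n \<sigma> c" "e \<ge> 1" "i \<in> {1..n}"
  shows "c i \<noteq> 0"
proof
  assume "c i = 0"
  moreover have "c i ^ e = 1" using assms by (simp add: monomial_data_def)
  ultimately show False using assms(2) by (simp add: power_0_left)
qed

lemma monomial_eq_imp_data_eq:
  assumes "monomial_data e n \<sigma> c" "e \<ge> 1" and "monomial n \<sigma> c = monomial n \<sigma>' c'"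
  shows "\<forall>i\<in>{1..n}. \<sigma> i = \<sigma>' i \<and> c i = c' i"
proof
  fix i assume i: "i \<in> {1..n}"
  have "monomial n \<sigma>' c' i (\<sigma> i) = c i"
    using i assms(3) monomial_data_range[OF assms(1)] by (metis monomial_def)
  then show "\<sigma> i = \<sigma>' i \<and> c i = c' i"
    using i monomial_data_nonzero[OF assms(1,2) i] by (auto simp: monomial_def split: if_splits)
qed

lemma monomial_data_cong:
  assumes "monomial_data e n \<sigma> c" "\<forall>i\<in>{1..n}. \<sigma> i = \<sigma>' i \<and> c i = c' i"
  shows "monomial_data e n \<sigma>' c'"
proof -
  have "bij_betw \<sigma>' {1..n} {1..n}"
    using assms bij_betw_cong[of "{1..n}" \<sigma> \<sigma>'] by (auto simp: monomial_data_def)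
  moreover have "(\<Prod>i\<in>{1..n}. c' i) = (\<Prod>i\<in>{1..n}. c i)"
    using assms(2) by (auto intro!: prod.cong)
  ultimately show ?thesis using assms by (auto simp: monomial_data_def)
qed

lemma monomial_data_id: "monomial_data e n id (\<lambda>_. 1)"
  by (simp add: monomial_data_def)

lemma monomial_data_mult:
  assumes "monomial_data e n \<sigma> c" "monomial_data e n \<tau> d"
  shows "monomial_data e n (\<tau> \<circ> \<sigma>) (\<lambda>i. c i * d (\<sigma> i))"
proof -
  have \<sigma>: "bij_betw \<sigma> {1..n} {1..n}" and \<tau>: "bij_betw \<tau> {1..n} {1..n}"
    using assms by (auto simp: monomial_data_def)
  have "(\<Prod>i\<in>{1..n}. d (\<sigma> i)) = (\<Prod>i\<in>{1..n}. d i)"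
    using prod.reindex_bij_betw[OF \<sigma>, of d] by simp
  then show ?thesis
    using assms bij_betw_trans[OF \<sigma> \<tau>] monomial_data_range[OF assms(1)]
    by (auto simp: monomial_data_def power_mult_distrib prod.distrib)
qed

lemma Geen_iff_monomial:
  assumes "e \<ge> 1"
  shows "A \<in> Geen e n \<longleftrightarrow> (\<exists>\<sigma> c. monomial_data e n \<sigma> c \<and> A = monomial n \<sigma> c)"
proof
  assume "A \<in> Geen e n"
  then obtain \<sigma> where z: "\<forall>i j. (i \<notin> {1..n} \<or> j \<notin> {1..n}) \<longrightarrow> A i j = 0"
    and b: "bij_betw \<sigma> {1..n} {1..n}"
    and nz: "\<forall>i\<in>{1..n}. \<forall>j\<in>{1..n}. A i j \<noteq> 0 \<longleftrightarrow> j = \<sigma> i"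
    and r: "\<forall>i\<in>{1..n}. (A i (\<sigma> i)) ^ e = 1"
    and p: "(\<Prod>i\<in>{1..n}. A i (\<sigma> i)) = 1"
    unfolding Geen_def by blast
  have "A = monomial n \<sigma> (\<lambda>i. A i (\<sigma> i))"
    using z nz by (fastforce simp: monomial_def fun_eq_iff)
  moreover have "monomial_data e n \<sigma> (\<lambda>i. A i (\<sigma> i))"
    using b r p by (simp add: monomial_data_def)
  ultimately show "\<exists>\<sigma> c. monomial_data e n \<sigma> c \<and> A = monomial n \<sigma> c" by blast
next
  assume "\<exists>\<sigma> c. monomial_data e n \<sigma> c \<and> A = monomial n \<sigma> c"
  then obtain \<sigma> c where v: "monomial_data e n \<sigma> c" and A: "A = monomial n \<sigma> c" by blast
  have rg: "\<forall>i\<in>{1..n}. \<sigma> i \<in> {1..n}" using monomial_data_range[OF v] .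
  have "(\<Prod>i\<in>{1..n}. A i (\<sigma> i)) = (\<Prod>i\<in>{1..n}. c i)"
    using rg by (auto simp: A monomial_def intro!: prod.cong)
  then show "A \<in> Geen e n"
    unfolding Geen_def using v rg monomial_data_nonzero[OF v assms]
    by (intro CollectI conjI allI impI exI[of _ \<sigma>]) (auto simp: A monomial_def monomial_data_def)
qed

definition adj_swap :: "nat \<Rightarrow> nat \<Rightarrow> nat" where
  "adj_swap a i = (if i = a then Suc a else if i = Suc a then a else i)"

lemma adj_swap_adj_swap [simp]: "adj_swap a (adj_swap a i) = i"
  by (auto simp: adj_swap_def)

lemma bij_betw_adj_swap:
  assumes "1 \<le> a" "Suc a \<le> n"
  shows "bij_betw (adj_swap a) {1..n} {1..n}"
  by (rule bij_betw_byWitness[where f'="adj_swap a"]) (use assms in \<open>auto simp: adj_swap_def\<close>)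

lemma zeta_nonzero [simp]: "zeta e \<noteq> 0"
  by (simp add: zeta_def)

lemma zeta_pow_eq_cis: "zeta e ^ k = cis (2 * pi * real k / real e)"
  by (simp add: zeta_def DeMoivre mult_ac)

lemma zeta_pow_root: "e \<ge> 1 \<Longrightarrow> (zeta e ^ k) ^ e = 1"
  by (simp add: zeta_pow_eq_cis DeMoivre flip: power_mult)

lemma root_of_unity_eq_zeta_pow:
  assumes "e \<ge> 1" "z ^ e = 1"
  shows "\<exists>k<e. z = zeta e ^ k"
proof -
  have "z \<in> (\<lambda>k. cis (2 * pi * real k / real e)) ` {..<e}"
    using bij_betw_roots_unity[of e] assms by (simp add: bij_betw_def)
  then show ?thesis by (auto simp: zeta_pow_eq_cis)
qed

lemma zeta_pow_neq_1:
  assumes "0 < k" "k < e"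
  shows "zeta e ^ k \<noteq> 1"
proof
  assume "zeta e ^ k = 1"
  then have eq: "cis (2 * pi * real k / real e) = cis (2 * pi * real 0 / real e)"
    by (simp add: zeta_pow_eq_cis)
  have "inj_on (\<lambda>k. cis (2 * pi * real k / real e)) {..<e}"
    using bij_betw_roots_unity[of e] assms by (simp add: bij_betw_def)
  from inj_onD[OF this eq] have "k = 0" using assms by simp
  then show False using assms by simp
qed

lemma prod_two_coeffs:
  assumes "a \<in> {1..n}" "b \<in> {1..n}" "a \<noteq> b"
  shows "(\<Prod>i\<in>{1..n::nat}. (if i = a then x else 1) * (if i = b then y else (1::complex))) = x * y"
  using assms by (simp add: prod.distrib)

definition two_point :: "complex \<Rightarrow> nat \<Rightarrow> nat \<Rightarrow> complex" where
  "two_point z b i = (if i = 1 then inverse z else 1) * (if i = b then z else 1)"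

lemma monomial_data_two_point:
  assumes "1 \<le> a" "Suc a \<le> n" "b \<in> {2..n}" "e \<ge> 1" "z ^ e = 1"
  shows "monomial_data e n (adj_swap a) (two_point z b)"
proof -
  have "z \<noteq> 0" using assms(4,5) by (metis power_0_left not_one_le_zero zero_neq_one)
  then show ?thesis
    using assms bij_betw_adj_swap[of a n] prod_two_coeffs[of 1 n b "inverse z" z]
    by (auto simp: monomial_data_def two_point_def power_mult_distrib power_inverse)
qed

lemma gen_t_eq_monomial: "n \<ge> 2 \<Longrightarrow> gen_t e n k = monomial n (adj_swap 1) (two_point (zeta e ^ k) 2)"
  by (auto simp: gen_t_def monomial_def adj_swap_def two_point_def fun_eq_iff)

lemma gen_s_eq_monomial: "3 \<le> j \<Longrightarrow> j \<le> n \<Longrightarrow> gen_s n j = monomial n (adj_swap (j - 1)) (\<lambda>_. 1)"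
  by (auto simp: gen_s_def monomial_def adj_swap_def fun_eq_iff)

text \<open>The common shape of the generators \<open>t\<^sub>i\<close> and \<open>s\<^sub>j\<close>.\<close>

definition gen_data :: "nat \<Rightarrow> nat \<Rightarrow> nat \<Rightarrow> (nat \<Rightarrow> complex) \<Rightarrow> bool" where
  "gen_data e n a r \<longleftrightarrow> 1 \<le> a \<and> Suc a \<le> n \<and> monomial_data e n (adj_swap a) r
     \<and> (\<forall>b\<in>{2..n}. b \<noteq> Suc a \<longrightarrow> r b = 1) \<and> (a \<noteq> 1 \<longrightarrow> r (Suc a) = 1)
     \<and> (\<forall>i\<in>{1..n}. r i * r (adj_swap a i) = 1)"

lemma gen_data_t:
  assumes "n \<ge> 2" "e \<ge> 1" "z ^ e = 1"
  shows "gen_data e n 1 (two_point z 2)"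
proof -
  have "z \<noteq> 0" using assms(2,3) by (metis power_0_left not_one_le_zero zero_neq_one)
  then show ?thesis
    using assms monomial_data_two_point[of 1 n 2] by (auto simp: gen_data_def two_point_def adj_swap_def)
qed

lemma gen_data_s:
  assumes "3 \<le> j" "j \<le> n"
  shows "gen_data e n (j - 1) (\<lambda>_. 1)"
  using assms bij_betw_adj_swap[of "j - 1" n] by (auto simp: gen_data_def monomial_data_def)

lemma gens_imp_gen_data:
  assumes "e \<ge> 2" "n \<ge> 2" "x \<in> gens e n"
  shows "\<exists>a r. x = monomial n (adj_swap a) r \<and> gen_data e n a r"
proof -
  consider (t) k where "x = gen_t e n k" | (s) j where "3 \<le> j" "j \<le> n" "x = gen_s n j"
    using assms(3) unfolding gens_def by blast
  then show ?thesis
  proof cases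
    case t
    then show ?thesis
      using gen_t_eq_monomial[OF assms(2)] gen_data_t[OF assms(2) _ zeta_pow_root, of e] assms(1) by fastforce
  next
    case s
    then show ?thesis using gen_s_eq_monomial gen_data_s by blast
  qed
qed

section \<open>The length formula\<close>

definition row_pairs :: "nat \<Rightarrow> (nat \<times> nat) set" where
  "row_pairs n = {(a, b). 1 \<le> a \<and> a < b \<and> b \<le> n}"

definition pair_len :: "(nat \<Rightarrow> nat) \<Rightarrow> (nat \<Rightarrow> complex) \<Rightarrow> nat \<Rightarrow> nat \<Rightarrow> nat" where
  "pair_len \<sigma> c a b = (if \<sigma> b < \<sigma> a then 1 else if c b = 1 then 0 else 2)"

definition mono_len :: "nat \<Rightarrow> (nat \<Rightarrow> nat) \<Rightarrow> (nat \<Rightarrow> complex) \<Rightarrow> nat" where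
  "mono_len n \<sigma> c = (\<Sum>(a, b)\<in>row_pairs n. pair_len \<sigma> c a b)"

lemma finite_row_pairs [simp]: "finite (row_pairs n)"
  by (rule finite_subset[of _ "{1..n} \<times> {1..n}"]) (auto simp: row_pairs_def)

lemma mono_len_cong:
  assumes "\<forall>i\<in>{1..n}. \<sigma> i = \<sigma>' i \<and> c i = c' i"
  shows "mono_len n \<sigma> c = mono_len n \<sigma>' c'"
  unfolding mono_len_def
  by (rule sum.cong) (use assms in \<open>auto simp: row_pairs_def pair_len_def\<close>)

lemma mono_len_id: "mono_len n id (\<lambda>_. 1) = 0"
  by (auto simp: mono_len_def pair_len_def row_pairs_def intro!: sum.neutral)

text \<open>Left multiplication by a generator swaps rows \<open>a\<close> and \<open>a + 1\<close>. All other pairs of rows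
  are permuted among themselves with unchanged costs, because \<open>r\<close> is trivial on rows \<open>b \<ge> 2\<close>
  except possibly on row \<open>a + 1 = 2\<close>.\<close>

lemma mono_len_gen_mult:
  assumes "gen_data e n a r"
  shows "mono_len n (\<sigma> \<circ> adj_swap a) (\<lambda>i. r i * c (adj_swap a i)) + pair_len \<sigma> c a (Suc a)
       = mono_len n \<sigma> c + (if \<sigma> a < \<sigma> (Suc a) then 1 else if r (Suc a) * c a = 1 then 0 else 2)"
proof -
  have a: "1 \<le> a" "Suc a \<le> n"
    and r: "\<forall>b\<in>{2..n}. b \<noteq> Suc a \<longrightarrow> r b = 1" "a \<noteq> 1 \<longrightarrow> r (Suc a) = 1"
    using assms by (auto simp: gen_data_def)
  define c' where "c' = (\<lambda>i. r i * c (adj_swap a i))"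
  define Q where "Q = row_pairs n - {(a, Suc a)}"
  define sp where "sp = (\<lambda>p. (adj_swap a (fst p), adj_swap a (snd p)))"
  have split: "\<And>f. (\<Sum>(x, y)\<in>row_pairs n. f x y) = f a (Suc a) + (\<Sum>(x, y)\<in>Q. f x y)"
  proof -
    have "(a, Suc a) \<in> row_pairs n" using a by (simp add: row_pairs_def)
    then show "(\<Sum>(x, y)\<in>row_pairs n. f x y) = f a (Suc a) + (\<Sum>(x, y)\<in>Q. f x y)" for f
      unfolding Q_def by (simp add: sum.remove)
  qed
  have sp_Q: "sp p \<in> Q" if "p \<in> Q" for p
    using that a unfolding Q_def sp_def row_pairs_def adj_swap_def by (cases p) auto
  have "(\<Sum>(x, y)\<in>Q. pair_len (\<sigma> \<circ> adj_swap a) c' x y) = (\<Sum>p\<in>Q. (\<lambda>(x, y). pair_len \<sigma> c x y) (sp p))"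
  proof (rule sum.cong[OF refl], clarify)
    fix x y assume p: "(x, y) \<in> Q"
    have "r y = 1"
      using p r a by (cases "y = Suc a") (auto simp: Q_def row_pairs_def)
    then show "pair_len (\<sigma> \<circ> adj_swap a) c' x y = (\<lambda>(x, y). pair_len \<sigma> c x y) (sp (x, y))"
      by (simp add: pair_len_def c'_def sp_def)
  qed
  also have "\<dots> = (\<Sum>(x, y)\<in>Q. pair_len \<sigma> c x y)"
    by (rule sum.reindex_bij_witness[where i=sp and j=sp]) (auto simp: sp_Q, simp_all add: sp_def)
  finally have Q: "(\<Sum>(x, y)\<in>Q. pair_len (\<sigma> \<circ> adj_swap a) c' x y) = (\<Sum>(x, y)\<in>Q. pair_len \<sigma> c x y)" .
  show ?thesis
    unfolding mono_len_def c'_def[symmetric] split Q by (simp add: pair_len_def c'_def adj_swap_def)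
qed

lemma mono_len_gen_mult_bounds:
  assumes "gen_data e n a r" "inj_on \<sigma> {1..n}"
  shows "mono_len n (\<sigma> \<circ> adj_swap a) (\<lambda>i. r i * c (adj_swap a i)) \<le> mono_len n \<sigma> c + 1"
    and "mono_len n \<sigma> c \<le> mono_len n (\<sigma> \<circ> adj_swap a) (\<lambda>i. r i * c (adj_swap a i)) + 1"
proof -
  have "1 \<le> a" "Suc a \<le> n" using assms(1) by (auto simp: gen_data_def)
  then have "\<sigma> a \<noteq> \<sigma> (Suc a)" using inj_onD[OF assms(2), of a "Suc a"] by auto
  then show "mono_len n (\<sigma> \<circ> adj_swap a) (\<lambda>i. r i * c (adj_swap a i)) \<le> mono_len n \<sigma> c + 1"
    and "mono_len n \<sigma> c \<le> mono_len n (\<sigma> \<circ> adj_swap a) (\<lambda>i. r i * c (adj_swap a i)) + 1"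
    using mono_len_gen_mult[OF assms(1), of \<sigma> c] unfolding pair_len_def
    by (auto split: if_splits)
qed

lemma gen_data_involutive:
  assumes "gen_data e n a r"
  shows "mmult n (monomial n (adj_swap a) r) (monomial n (adj_swap a) r) = mone n"
proof -
  have "monomial_data e n (adj_swap a) r" and inv: "\<forall>i\<in>{1..n}. r i * r (adj_swap a i) = 1"
    using assms by (auto simp: gen_data_def)
  then have "mmult n (monomial n (adj_swap a) r) (monomial n (adj_swap a) r)
      = monomial n (adj_swap a \<circ> adj_swap a) (\<lambda>i. r i * r (adj_swap a i))"
    by (intro mmult_monomial monomial_data_range)
  also have "\<dots> = mone n" unfolding mone_eq_monomial by (rule monomial_cong) (use inv in auto)
  finally show ?thesis .
qed

lemma increasing_bij_eq_id:
  assumes b: "bij_betw \<sigma> {1..n} {1..(n::nat)}"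
    and inc: "\<And>m. 2 \<le> m \<Longrightarrow> m \<le> n \<Longrightarrow> \<sigma> (m - 1) < \<sigma> m"
  shows "\<forall>i\<in>{1..n}. \<sigma> i = i"
proof -
  have rg: "\<And>i. i \<in> {1..n} \<Longrightarrow> \<sigma> i \<in> {1..n}" using b by (auto simp: bij_betw_def)
  have ge: "i \<le> \<sigma> i" if "1 \<le> i" "i \<le> n" for i
    using that
  proof (induction i rule: nat_induct_at_least)
    case base then show ?case using rg[of 1] by auto
  next
    case (Suc m)
    then show ?case using inc[of "Suc m"] by auto
  qed
  have le: "\<sigma> (n - d) \<le> n - d" if "d < n" for d
    using that
  proof (induction d)
    case 0 then show ?case using rg[of n] by auto
  next
    case (Suc d)
    have "\<sigma> (n - Suc d) < \<sigma> (n - d)" using inc[of "n - d"] Suc.prems by (auto simp: Suc_diff_Suc)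
    then show ?case using Suc by auto
  qed
  show ?thesis
  proof
    fix i assume i: "i \<in> {1..n}"
    have "\<sigma> (n - (n - i)) \<le> n - (n - i)" using le[of "n - i"] i by auto
    then show "\<sigma> i = i" using ge[of i] i by auto
  qed
qed

lemma gen_t_in_gens: "n \<ge> 2 \<Longrightarrow> k < e \<Longrightarrow> monomial n (adj_swap 1) (two_point (zeta e ^ k) 2) \<in> gens e n"
  using gen_t_eq_monomial unfolding gens_def by fastforce

lemma gen_s_in_gens: "2 \<le> m \<Longrightarrow> Suc m \<le> n \<Longrightarrow> monomial n (adj_swap m) (\<lambda>_. 1) \<in> gens e n"
  using gen_s_eq_monomial[of "Suc m" n] unfolding gens_def by force

text \<open>The hypothesis \<open>no_descent\<close> below says, via \<open>mono_len_gen_mult\<close>, that no generator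
  shortens \<open>monomial n \<sigma> c\<close>. The generators \<open>t\<^sub>k\<close> with \<open>\<zeta>\<^sup>k = c 1\<^sup>-\<^sup>1\<close> and \<open>t\<^sub>0\<close> then
  force \<open>\<sigma> 1 < \<sigma> 2\<close> and \<open>c 2 = 1\<close>, and the \<open>s\<^sub>j\<close> propagate this down the rows.\<close>

lemma no_descent_first_rows:
  assumes e: "e \<ge> 2" and n: "n \<ge> 2" and v: "monomial_data e n \<sigma> c"
    and no_descent: "\<And>a r. monomial n (adj_swap a) r \<in> gens e n \<Longrightarrow> gen_data e n a r \<Longrightarrow>
       pair_len \<sigma> c a (Suc a) \<le> (if \<sigma> a < \<sigma> (Suc a) then 1 else if r (Suc a) * c a = 1 then 0 else 2)"
  shows "\<sigma> 1 < \<sigma> 2 \<and> c 2 = 1"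
proof -
  have e1: "e \<ge> 1" using e by simp
  have t: "pair_len \<sigma> c 1 2 \<le> (if \<sigma> 1 < \<sigma> 2 then 1 else if zeta e ^ k * c 1 = 1 then 0 else 2)"
    if "k < e" for k
  proof -
    have "pair_len \<sigma> c 1 (Suc 1) \<le> (if \<sigma> 1 < \<sigma> (Suc 1) then 1
        else if two_point (zeta e ^ k) 2 (Suc 1) * c 1 = 1 then 0 else 2)"
      by (rule no_descent[OF gen_t_in_gens[OF n that] gen_data_t[OF n e1 zeta_pow_root[OF e1]]])
    then show ?thesis by (simp add: two_point_def numeral_2_eq_2 split: if_split_asm)
  qed
  have "\<sigma> 1 < \<sigma> 2"
  proof (rule ccontr)
    assume "\<not> \<sigma> 1 < \<sigma> 2"
    moreover have "\<sigma> 1 \<noteq> \<sigma> 2" using inj_onD[OF monomial_data_inj[OF v], of 1 2] n by auto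
    ultimately have "\<sigma> 2 < \<sigma> 1" by simp
    have "inverse (c 1) ^ e = 1" using v n by (simp add: monomial_data_def power_inverse)
    then obtain k where k: "k < e" "inverse (c 1) = zeta e ^ k"
      using root_of_unity_eq_zeta_pow[OF e1] by blast
    have "c 1 \<noteq> 0" using monomial_data_nonzero[OF v e1, of 1] n by simp
    then have "zeta e ^ k * c 1 = 1" using k(2) by (metis left_inverse)
    then show False using t[OF k(1)] \<open>\<sigma> 2 < \<sigma> 1\<close> by (simp add: pair_len_def)
  qed
  moreover have "c 2 = 1"
    using t[of 0] e calculation by (auto simp: pair_len_def split: if_splits)
  ultimately show ?thesis ..
qed

lemma no_descent_imp_identity:
  assumes e: "e \<ge> 2" and n: "n \<ge> 2" and v: "monomial_data e n \<sigma> c"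
    and no_descent: "\<And>a r. monomial n (adj_swap a) r \<in> gens e n \<Longrightarrow> gen_data e n a r \<Longrightarrow>
       mono_len n \<sigma> c \<le> mono_len n (\<sigma> \<circ> adj_swap a) (\<lambda>i. r i * c (adj_swap a i))"
  shows "\<forall>i\<in>{1..n}. \<sigma> i = i \<and> c i = 1"
proof -
  have pair_bound: "pair_len \<sigma> c a (Suc a)
      \<le> (if \<sigma> a < \<sigma> (Suc a) then 1 else if r (Suc a) * c a = 1 then 0 else 2)"
    if "monomial n (adj_swap a) r \<in> gens e n" "gen_data e n a r" for a r
    using mono_len_gen_mult[OF that(2), of \<sigma> c] no_descent[OF that] by linarith
  have rows: "\<sigma> (m - 1) < \<sigma> m \<and> c m = 1" if "2 \<le> m" "m \<le> n" for m
    using that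
  proof (induction m rule: nat_induct_at_least)
    case base
    have "\<sigma> 1 < \<sigma> 2 \<and> c 2 = 1"
      by (rule no_descent_first_rows[OF e n v]) (rule pair_bound)
    then show ?case by simp
  next
    case (Suc m)
    have "pair_len \<sigma> c m (Suc m) \<le> (if \<sigma> m < \<sigma> (Suc m) then 1 else if 1 * c m = 1 then 0 else 2)"
      by (rule pair_bound[OF gen_s_in_gens]) (use gen_data_s[of "Suc m" n] Suc.hyps Suc.prems in simp_all)
    moreover have "c m = 1" using Suc by simp
    moreover have "\<sigma> m \<noteq> \<sigma> (Suc m)" using inj_onD[OF monomial_data_inj[OF v], of m "Suc m"] Suc by auto
    ultimately show ?case by (auto simp: pair_len_def split: if_splits)
  qed
  have \<sigma>: "\<forall>i\<in>{1..n}. \<sigma> i = i"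
    using increasing_bij_eq_id rows v by (auto simp: monomial_data_def)
  have "(\<Prod>i\<in>{1..n}. c i) = c 1 * (\<Prod>i\<in>{2..n}. c i)"
    using n by (simp add: prod.atLeast_Suc_atMost numeral_2_eq_2)
  then have "c 1 = 1" using v rows by (simp add: monomial_data_def)
  then have "c i = 1" if "i \<in> {1..n}" for i
    using that rows[of i] by (cases "i = 1") auto
  then show ?thesis using \<sigma> by blast
qed

lemma mmult_mone_left: "monomial_data e n \<sigma> c \<Longrightarrow> mmult n (mone n) (monomial n \<sigma> c) = monomial n \<sigma> c"
  by (simp add: mone_eq_monomial mmult_monomial)

lemma word_mono_len_bound:
  assumes e: "e \<ge> 2" and n: "n \<ge> 2"
  shows "set ws \<subseteq> gens e n \<Longrightarrow>
    \<exists>\<sigma> c. monomial_data e n \<sigma> c \<and> wprod n ws = monomial n \<sigma> c \<and> mono_len n \<sigma> c \<le> length ws"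
proof (induction ws)
  case Nil
  have "wprod n [] = monomial n id (\<lambda>_. 1)" by (simp add: wprod_def mone_eq_monomial)
  then show ?case using monomial_data_id[of e n] mono_len_id[of n] by auto
next
  case (Cons x ws)
  then obtain \<sigma> c where v: "monomial_data e n \<sigma> c" and ws: "wprod n ws = monomial n \<sigma> c"
    and len: "mono_len n \<sigma> c \<le> length ws" by auto
  obtain a r where x: "x = monomial n (adj_swap a) r" and g: "gen_data e n a r"
    using gens_imp_gen_data[OF e n, of x] Cons.prems by auto
  have vr: "monomial_data e n (adj_swap a) r" using g by (simp add: gen_data_def)
  have "wprod n (x # ws) = mmult n x (wprod n ws)" by (simp add: wprod_def)
  also have "\<dots> = monomial n (\<sigma> \<circ> adj_swap a) (\<lambda>i. r i * c (adj_swap a i))"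
    unfolding x ws by (rule mmult_monomial[OF monomial_data_range[OF vr]])
  finally have "wprod n (x # ws) = monomial n (\<sigma> \<circ> adj_swap a) (\<lambda>i. r i * c (adj_swap a i))" .
  moreover have "mono_len n (\<sigma> \<circ> adj_swap a) (\<lambda>i. r i * c (adj_swap a i)) \<le> length (x # ws)"
    using mono_len_gen_mult_bounds(1)[OF g monomial_data_inj[OF v], of c] len by simp
  ultimately show ?case using monomial_data_mult[OF vr v] by blast
qed

lemma monomial_word:
  assumes e: "e \<ge> 2" and n: "n \<ge> 2"
  shows "monomial_data e n \<sigma> c \<Longrightarrow>
    \<exists>ws. set ws \<subseteq> gens e n \<and> length ws = mono_len n \<sigma> c \<and> wprod n ws = monomial n \<sigma> c"
proof (induction "mono_len n \<sigma> c" arbitrary: \<sigma> c rule: less_induct)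
  case less
  show ?case
  proof (cases "\<forall>i\<in>{1..n}. \<sigma> i = i \<and> c i = 1")
    case True
    then have "monomial n \<sigma> c = mone n" "mono_len n \<sigma> c = 0"
      using monomial_cong[OF True] mono_len_cong[OF True] mono_len_id
      by (auto simp: mone_eq_monomial id_def)
    then show ?thesis by (intro exI[of _ "[]"]) (simp add: wprod_def)
  next
    case False
    then obtain a r where x: "monomial n (adj_swap a) r \<in> gens e n" and g: "gen_data e n a r"
      and shorter: "mono_len n (\<sigma> \<circ> adj_swap a) (\<lambda>i. r i * c (adj_swap a i)) < mono_len n \<sigma> c"
      using no_descent_imp_identity[OF e n less.prems] by force
    have vr: "monomial_data e n (adj_swap a) r" using g by (simp add: gen_data_def)
    obtain ws where ws: "set ws \<subseteq> gens e n"
      "length ws = mono_len n (\<sigma> \<circ> adj_swap a) (\<lambda>i. r i * c (adj_swap a i))"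
      "wprod n ws = monomial n (\<sigma> \<circ> adj_swap a) (\<lambda>i. r i * c (adj_swap a i))"
      using less.hyps[OF shorter monomial_data_mult[OF vr less.prems]] by blast
    have "mmult n (monomial n (adj_swap a) r) (monomial n \<sigma> c)
        = monomial n (\<sigma> \<circ> adj_swap a) (\<lambda>i. r i * c (adj_swap a i))"
      by (rule mmult_monomial[OF monomial_data_range[OF vr]])
    then have "wprod n (monomial n (adj_swap a) r # ws)
        = mmult n (mmult n (monomial n (adj_swap a) r) (monomial n (adj_swap a) r)) (monomial n \<sigma> c)"
      using ws(3) by (simp add: wprod_def mmult_assoc)
    also have "\<dots> = monomial n \<sigma> c"
      using gen_data_involutive[OF g] mmult_mone_left[OF less.prems] by simp
    finally show ?thesis
      using ws x shorter mono_len_gen_mult_bounds(2)[OF g monomial_data_inj[OF less.prems], of c]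
      by (intro exI[of _ "monomial n (adj_swap a) r # ws"]) auto
  qed
qed

lemma wlen_monomial:
  assumes "e \<ge> 2" "n \<ge> 2" "monomial_data e n \<sigma> c"
  shows "wlen e n (monomial n \<sigma> c) = mono_len n \<sigma> c"
  unfolding wlen_def
proof (rule Least_equality)
  show "\<exists>ws. set ws \<subseteq> gens e n \<and> length ws = mono_len n \<sigma> c \<and> wprod n ws = monomial n \<sigma> c"
    using monomial_word[OF assms] .
next
  fix k assume "\<exists>ws. set ws \<subseteq> gens e n \<and> length ws = k \<and> wprod n ws = monomial n \<sigma> c"
  then obtain ws where ws: "set ws \<subseteq> gens e n" "length ws = k" "wprod n ws = monomial n \<sigma> c"
    by blast
  obtain \<sigma>' c' where v': "monomial_data e n \<sigma>' c'" and eq: "monomial n \<sigma> c = monomial n \<sigma>' c'"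
    and "mono_len n \<sigma>' c' \<le> k"
    using word_mono_len_bound[OF assms(1,2) ws(1)] ws(2,3) by auto
  moreover have "mono_len n \<sigma> c = mono_len n \<sigma>' c'"
    using mono_len_cong monomial_eq_imp_data_eq[OF assms(3) _ eq] assms(1) by simp
  ultimately show "mono_len n \<sigma> c \<le> k" by simp
qed

lemma mmult_mone_right: "monomial_data e n \<sigma> c \<Longrightarrow> mmult n (monomial n \<sigma> c) (mone n) = monomial n \<sigma> c"
  by (drule monomial_data_range) (simp add: mone_eq_monomial mmult_monomial)

lemma monomial_inverse_exists:
  assumes e: "e \<ge> 1" and v: "monomial_data e n \<sigma> c"
  shows "\<exists>\<tau> d. monomial_data e n \<tau> d \<and> mmult n (monomial n \<sigma> c) (monomial n \<tau> d) = mone n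
    \<and> mmult n (monomial n \<tau> d) (monomial n \<sigma> c) = mone n"
proof -
  have b: "bij_betw \<sigma> {1..n} {1..n}" using v by (simp add: monomial_data_def)
  define \<tau> where "\<tau> = inv_into {1..n} \<sigma>"
  define d where "d = (\<lambda>i. inverse (c (\<tau> i)))"
  have b': "bij_betw \<tau> {1..n} {1..n}" unfolding \<tau>_def by (rule bij_betw_inv_into[OF b])
  have l: "\<And>i. i \<in> {1..n} \<Longrightarrow> \<tau> (\<sigma> i) = i" unfolding \<tau>_def using bij_betw_inv_into_left[OF b] .
  have r: "\<And>i. i \<in> {1..n} \<Longrightarrow> \<sigma> (\<tau> i) = i" unfolding \<tau>_def using bij_betw_inv_into_right[OF b] .
  have rg': "\<And>i. i \<in> {1..n} \<Longrightarrow> \<tau> i \<in> {1..n}" using b' by (auto simp: bij_betw_def)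
  have nz: "\<And>i. i \<in> {1..n} \<Longrightarrow> c i \<noteq> 0" using monomial_data_nonzero[OF v e] .
  have "(\<Prod>i\<in>{1..n}. c (\<tau> i)) = (\<Prod>i\<in>{1..n}. c i)"
    using prod.reindex_bij_betw[OF b', of c] by simp
  then have "(\<Prod>i\<in>{1..n}. d i) = inverse (\<Prod>i\<in>{1..n}. c i)"
    using prod_inversef[of "\<lambda>i. c (\<tau> i)" "{1..n}"] by (simp add: d_def o_def)
  then have vd: "monomial_data e n \<tau> d"
    using v b' rg' by (auto simp: monomial_data_def d_def power_inverse)
  have "mmult n (monomial n \<sigma> c) (monomial n \<tau> d) = monomial n (\<tau> \<circ> \<sigma>) (\<lambda>i. c i * d (\<sigma> i))"
    by (rule mmult_monomial[OF monomial_data_range[OF v]])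
  also have "\<dots> = mone n"
    unfolding mone_eq_monomial by (rule monomial_cong) (auto simp: l d_def nz)
  moreover have "mmult n (monomial n \<tau> d) (monomial n \<sigma> c) = monomial n (\<sigma> \<circ> \<tau>) (\<lambda>i. d i * c (\<tau> i))"
    by (rule mmult_monomial[OF monomial_data_range[OF vd]])
  moreover have "\<dots> = mone n"
    unfolding mone_eq_monomial by (rule monomial_cong) (auto simp: r d_def nz[OF rg'])
  ultimately show ?thesis using vd by metis
qed

lemma ginv_monomial_eq:
  assumes e: "e \<ge> 1" and v: "monomial_data e n \<sigma> c" and B: "B \<in> Geen e n"
    and inv: "mmult n (monomial n \<sigma> c) B = mone n"
  shows "ginv e n (monomial n \<sigma> c) = B"
  unfolding ginv_def
proof (rule the_equality)
  show "B \<in> Geen e n \<and> mmult n (monomial n \<sigma> c) B = mone n" using B inv by simp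
next
  obtain \<tau> d where vd: "monomial_data e n \<tau> d"
    and left_inv: "mmult n (monomial n \<tau> d) (monomial n \<sigma> c) = mone n"
    using monomial_inverse_exists[OF e v] by blast
  have right_inv_unique: "X = monomial n \<tau> d"
    if XG: "X \<in> Geen e n" and XR: "mmult n (monomial n \<sigma> c) X = mone n" for X
  proof -
    obtain \<rho> f where vx: "monomial_data e n \<rho> f" and X: "X = monomial n \<rho> f"
      using XG Geen_iff_monomial[OF e] by blast
    have "X = mmult n (mmult n (monomial n \<tau> d) (monomial n \<sigma> c)) X"
      using left_inv mmult_mone_left[OF vx] X by simp
    also have "\<dots> = monomial n \<tau> d"
      using XR mmult_mone_right[OF vd] by (simp add: mmult_assoc)
    finally show ?thesis .
  qed
  fix B' assume "B' \<in> Geen e n \<and> mmult n (monomial n \<sigma> c) B' = mone n"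
  then show "B' = B" using right_inv_unique B inv by metis
qed

lemma ginv_monomial:
  assumes "e \<ge> 1" "monomial_data e n \<sigma> c"
  shows "\<exists>\<tau> d. monomial_data e n \<tau> d \<and> ginv e n (monomial n \<sigma> c) = monomial n \<tau> d"
proof -
  obtain \<tau> d where "monomial_data e n \<tau> d" "mmult n (monomial n \<sigma> c) (monomial n \<tau> d) = mone n"
    using monomial_inverse_exists[OF assms] by blast
  then show ?thesis using ginv_monomial_eq[OF assms] Geen_iff_monomial[OF assms(1)] by blast
qed

lemma card_row_pairs: "2 * card (row_pairs n) = n * (n - 1)"
proof (induction n)
  case 0
  have "row_pairs 0 = {}" by (auto simp: row_pairs_def)
  then show ?case by simp
next
  case (Suc n)
  have "row_pairs (Suc n) = row_pairs n \<union> (\<lambda>a. (a, Suc n)) ` {1..n}"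
    by (auto simp: row_pairs_def)
  moreover have "row_pairs n \<inter> (\<lambda>a. (a, Suc n)) ` {1..n} = {}"
    by (auto simp: row_pairs_def)
  ultimately have "card (row_pairs (Suc n)) = card (row_pairs n) + n"
    by (simp add: card_Un_disjoint card_image inj_on_def)
  then show ?case using Suc by (cases n) (auto simp: algebra_simps)
qed

lemma card_row_pairs_snd:
  assumes "b \<le> n"
  shows "card {p \<in> row_pairs n. snd p = b} = b - 1"
proof -
  have "{p \<in> row_pairs n. snd p = b} = (\<lambda>a. (a, b)) ` {1..<b}"
    using assms by (auto simp: row_pairs_def)
  then show ?thesis by (simp add: card_image inj_on_def)
qed

lemma mono_len_eq_max_iff:
  "mono_len n \<sigma> c = n * (n - 1) \<longleftrightarrow> (\<forall>(a, b)\<in>row_pairs n. pair_len \<sigma> c a b = 2)"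
proof -
  have max: "n * (n - 1) = (\<Sum>(a, b)\<in>row_pairs n. 2)" using card_row_pairs[of n] by simp
  show ?thesis
  proof
    assume "mono_len n \<sigma> c = n * (n - 1)"
    then have "(\<Sum>(a, b)\<in>row_pairs n. pair_len \<sigma> c a b) = (\<Sum>(a, b)\<in>row_pairs n. 2)"
      using max by (simp add: mono_len_def)
    from sum_mono_inv[OF this] show "\<forall>(a, b)\<in>row_pairs n. pair_len \<sigma> c a b = 2"
      by (force simp: pair_len_def)
  qed (use card_row_pairs[of n] in \<open>simp add: mono_len_def case_prod_beta\<close>)
qed

lemma sum_if_const_eq_card:
  "finite A \<Longrightarrow> (\<Sum>x\<in>A. if P x then k else 0) = k * card {x \<in> A. P x}"
  by (simp add: sum.inter_filter[symmetric])

lemma mono_len_id_eq: "mono_len n id c = 2 * card {p \<in> row_pairs n. c (snd p) \<noteq> 1}"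
proof -
  have "mono_len n id c = (\<Sum>p\<in>row_pairs n. if c (snd p) \<noteq> 1 then 2 else 0)"
    unfolding mono_len_def by (rule sum.cong) (auto simp: pair_len_def row_pairs_def)
  also have "\<dots> = 2 * card {p \<in> row_pairs n. c (snd p) \<noteq> 1}"
    by (simp add: sum_if_const_eq_card)
  finally show ?thesis .
qed

lemma adj_swap_inverts_iff: "1 \<le> a \<Longrightarrow> a < b \<Longrightarrow> adj_swap j b < adj_swap j a \<longleftrightarrow> (a, b) = (j, Suc j)"
  by (auto simp: adj_swap_def)

lemma mono_len_adj_swap_eq:
  assumes "1 \<le> j" "Suc j \<le> n"
  shows "mono_len n (adj_swap j) c = 1 + 2 * card ({p \<in> row_pairs n. c (snd p) \<noteq> 1} - {(j, Suc j)})"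
proof -
  define Q where "Q = row_pairs n - {(j, Suc j)}"
  have q: "(j, Suc j) \<in> row_pairs n" using assms by (simp add: row_pairs_def)
  have "mono_len n (adj_swap j) c = pair_len (adj_swap j) c j (Suc j) + (\<Sum>(a, b)\<in>Q. pair_len (adj_swap j) c a b)"
    unfolding mono_len_def Q_def using q by (simp add: sum.remove)
  also have "(\<Sum>(a, b)\<in>Q. pair_len (adj_swap j) c a b) = (\<Sum>p\<in>Q. if c (snd p) \<noteq> 1 then 2 else 0)"
  proof (rule sum.cong[OF refl], clarify)
    fix a b assume "(a, b) \<in> Q"
    then have "1 \<le> a" "a < b" "(a, b) \<noteq> (j, Suc j)" by (auto simp: Q_def row_pairs_def)
    then show "pair_len (adj_swap j) c a b = (if c (snd (a, b)) \<noteq> 1 then 2 else 0)"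
      by (simp add: pair_len_def adj_swap_inverts_iff)
  qed
  also have "\<dots> = 2 * card {p \<in> Q. c (snd p) \<noteq> 1}"
    by (rule sum_if_const_eq_card) (simp add: Q_def)
  also have "{p \<in> Q. c (snd p) \<noteq> 1} = {p \<in> row_pairs n. c (snd p) \<noteq> 1} - {(j, Suc j)}"
    by (auto simp: Q_def)
  moreover have "pair_len (adj_swap j) c j (Suc j) = 1" by (simp add: pair_len_def adj_swap_def)
  ultimately show ?thesis by simp
qed

lemma wlen_diagonal_max:
  assumes "e \<ge> 2" "n \<ge> 2" "monomial_data e n id c" "\<forall>b\<in>{2..n}. c b \<noteq> 1"
  shows "wlen e n (monomial n id c) = n * (n - 1)"
proof -
  have "{p \<in> row_pairs n. c (snd p) \<noteq> 1} = row_pairs n"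
    using assms(4) by (auto simp: row_pairs_def)
  then show ?thesis
    using wlen_monomial[OF assms(1-3)] mono_len_id_eq[of n c] card_row_pairs[of n] by simp
qed

section \<open>The powers of \<open>\<lambda>\<close> are balanced of maximal length\<close>

definition lam_coeffs :: "nat \<Rightarrow> nat \<Rightarrow> nat \<Rightarrow> nat \<Rightarrow> complex" where
  "lam_coeffs e n k i = (if i = 1 then inverse (zeta e ^ (n - 1)) ^ k else zeta e ^ k)"

lemma mpow_lam_eq_monomial: "n \<ge> 1 \<Longrightarrow> mpow n (lam e n) k = monomial n id (lam_coeffs e n k)"
proof (induction k)
  case 0
  have "lam_coeffs e n 0 = (\<lambda>_. 1)" by (simp add: lam_coeffs_def fun_eq_iff)
  then show ?case by (simp add: mpow_def mone_eq_monomial id_def)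
next
  case (Suc k)
  have "lam e n = monomial n id (lam_coeffs e n 1)"
    using Suc.prems by (auto simp: lam_def monomial_def lam_coeffs_def fun_eq_iff)
  then have "mpow n (lam e n) (Suc k) = monomial n id (\<lambda>i. lam_coeffs e n 1 i * lam_coeffs e n k i)"
    using Suc by (simp add: mpow_def mmult_monomial id_def comp_def)
  also have "(\<lambda>i. lam_coeffs e n 1 i * lam_coeffs e n k i) = lam_coeffs e n (Suc k)"
    by (auto simp: lam_coeffs_def fun_eq_iff)
  finally show ?case .
qed

lemma monomial_data_lam_coeffs:
  assumes "e \<ge> 1" "n \<ge> 1"
  shows "monomial_data e n id (lam_coeffs e n k)"
proof -
  have "(\<Prod>i\<in>{1..n}. lam_coeffs e n k i) = lam_coeffs e n k 1 * (\<Prod>i\<in>{2..n}. zeta e ^ k)"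
    using assms(2) by (simp add: prod.atLeast_Suc_atMost numeral_2_eq_2 lam_coeffs_def)
  also have "\<dots> = 1"
    by (simp add: lam_coeffs_def power_inverse flip: power_mult) (simp add: mult.commute)
  finally show ?thesis
    using zeta_pow_root[OF assms(1)]
    by (auto simp: monomial_data_def lam_coeffs_def power_inverse simp flip: power_mult)
qed

text \<open>Only non-inverted pairs \<open>a < b\<close> look at coefficients, and for them \<open>\<tau> b \<ge> 2\<close>, where
  \<open>D\<close> is scalar.\<close>

lemma mono_len_diag_commute:
  assumes "inj_on \<tau> {1..n}" "\<forall>i\<in>{1..n}. \<tau> i \<in> {1..n}" "\<forall>b\<in>{2..n}. D b = z"
  shows "mono_len n \<tau> (\<lambda>i. d i * D (\<tau> i)) = mono_len n \<tau> (\<lambda>i. D i * d i)"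
  unfolding mono_len_def
proof (rule sum.cong[OF refl], clarify)
  fix a b assume "(a, b) \<in> row_pairs n"
  then have ab: "1 \<le> a" "a < b" "b \<le> n" by (auto simp: row_pairs_def)
  show "pair_len \<tau> (\<lambda>i. d i * D (\<tau> i)) a b = pair_len \<tau> (\<lambda>i. D i * d i) a b"
  proof (cases "\<tau> b < \<tau> a")
    case False
    moreover have "\<tau> a \<noteq> \<tau> b" using inj_onD[OF assms(1), of a b] ab by auto
    moreover have "\<tau> a \<ge> 1" "\<tau> b \<le> n" using assms(2) ab by auto
    ultimately have "\<tau> b \<in> {2..n}" by auto
    then have "D (\<tau> b) = D b" using assms(3) ab by auto
    then show ?thesis by (simp add: pair_len_def mult.commute)
  qed (simp add: pair_len_def)
qed

lemma balanced_if_quotient_lens_eq: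
  assumes "\<And>w. w \<in> Geen e n \<Longrightarrow> wlen e n (mmult n (ginv e n w) g) = wlen e n (mmult n g (ginv e n w))"
  shows "balanced e n g"
  using assms
  unfolding balanced_def interval_l_def interval_r_def prefix_le_def suffix_le_def
  by (auto simp: add.commute)

lemma lam_pow_balanced_max_len:
  assumes e: "e \<ge> 2" and n: "n \<ge> 2" and k: "1 \<le> k" "k \<le> e - 1"
  shows "balanced e n (mpow n (lam e n) k) \<and> wlen e n (mpow n (lam e n) k) = n * (n - 1)"
proof -
  have e1: "e \<ge> 1" using e by simp
  define D where "D = lam_coeffs e n k"
  have g: "mpow n (lam e n) k = monomial n id D" using mpow_lam_eq_monomial n by (simp add: D_def)
  have vD: "monomial_data e n id D" using monomial_data_lam_coeffs[OF e1] n by (simp add: D_def)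
  have D: "\<forall>b\<in>{2..n}. D b = zeta e ^ k" by (simp add: D_def lam_coeffs_def)
  have "zeta e ^ k \<noteq> 1" by (rule zeta_pow_neq_1) (use k e in auto)
  then have "wlen e n (monomial n id D) = n * (n - 1)"
    using wlen_diagonal_max[OF e n vD] D by simp
  moreover have "balanced e n (monomial n id D)"
  proof (rule balanced_if_quotient_lens_eq)
    fix w assume "w \<in> Geen e n"
    then obtain \<sigma> c where "monomial_data e n \<sigma> c" "w = monomial n \<sigma> c"
      using Geen_iff_monomial[OF e1] by blast
    then obtain \<tau> d where vt: "monomial_data e n \<tau> d" and w: "ginv e n w = monomial n \<tau> d"
      using ginv_monomial[OF e1] by blast
    have "mmult n (ginv e n w) (monomial n id D) = monomial n \<tau> (\<lambda>i. d i * D (\<tau> i))"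
      unfolding w using mmult_monomial[OF monomial_data_range[OF vt]] by simp
    moreover have "mmult n (monomial n id D) (ginv e n w) = monomial n \<tau> (\<lambda>i. D i * d i)"
      unfolding w using mmult_monomial[of n id D \<tau> d] by simp
    ultimately show "wlen e n (mmult n (ginv e n w) (monomial n id D))
        = wlen e n (mmult n (monomial n id D) (ginv e n w))"
      using wlen_monomial[OF e n] monomial_data_mult[OF vt vD] monomial_data_mult[OF vD vt]
        mono_len_diag_commute[OF monomial_data_inj[OF vt] monomial_data_range[OF vt] D]
      by simp
  qed
  ultimately show ?thesis using g by simp
qed

section \<open>Balanced elements of maximal length are powers of \<open>\<lambda>\<close>\<close>

lemma max_len_imp_diagonal:
  assumes v: "monomial_data e n \<sigma> c" and len: "mono_len n \<sigma> c = n * (n - 1)"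
  shows "\<forall>i\<in>{1..n}. \<sigma> i = i" and "\<forall>b\<in>{2..n}. c b \<noteq> 1"
proof -
  have cost2: "\<not> \<sigma> b < \<sigma> a \<and> c b \<noteq> 1" if "1 \<le> a" "a < b" "b \<le> n" for a b
    using len that unfolding mono_len_eq_max_iff row_pairs_def
    by (auto simp: pair_len_def split: if_splits)
  show "\<forall>i\<in>{1..n}. \<sigma> i = i"
  proof (rule increasing_bij_eq_id)
    show "bij_betw \<sigma> {1..n} {1..n}" using v by (simp add: monomial_data_def)
    fix m assume m: "2 \<le> m" "m \<le> n"
    have "\<sigma> (m - 1) \<noteq> \<sigma> m"
    proof
      assume "\<sigma> (m - 1) = \<sigma> m"
      moreover have "m - 1 \<in> {1..n}" "m \<in> {1..n}" using m by auto
      ultimately have "m - 1 = m" using inj_onD[OF monomial_data_inj[OF v]] by blast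
      then show False using m by simp
    qed
    moreover have "\<not> \<sigma> m < \<sigma> (m - 1)" using cost2[of "m - 1" m] m by simp
    ultimately show "\<sigma> (m - 1) < \<sigma> m" by simp
  qed
  show "\<forall>b\<in>{2..n}. c b \<noteq> 1" using cost2[of 1] by auto
qed

lemma wlen_two_point_swap:
  assumes e: "e \<ge> 2" and n: "n \<ge> 2" and j: "1 \<le> j" "Suc j \<le> n" and y: "y ^ e = 1" "y \<noteq> 1"
  shows "wlen e n (monomial n (adj_swap j) (two_point y (Suc j))) = 2 * j - 1"
proof -
  have y0: "y \<noteq> 0" using y e by (metis power_0_left not_one_le_zero one_le_numeral order_trans zero_neq_one)
  have "{p \<in> row_pairs n. two_point y (Suc j) (snd p) \<noteq> 1} - {(j, Suc j)}
      = {p \<in> row_pairs n. snd p = Suc j} - {(j, Suc j)}"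
    using y y0 by (auto simp: row_pairs_def two_point_def)
  moreover have "card ({p \<in> row_pairs n. snd p = Suc j} - {(j, Suc j)}) = j - 1"
    using card_row_pairs_snd[OF j(2)] j by (simp add: row_pairs_def)
  ultimately show ?thesis
    using wlen_monomial[OF e n monomial_data_two_point[OF j, of "Suc j" e y]] mono_len_adj_swap_eq[OF j] j y e
    by simp
qed

lemma ginv_two_point_swap:
  assumes e: "e \<ge> 1" and j: "2 \<le> j" "Suc j \<le> n" and y: "y ^ e = 1"
  shows "ginv e n (monomial n (adj_swap j) (two_point y (Suc j)))
       = monomial n (adj_swap j) (two_point (inverse y) j)"
proof (rule ginv_monomial_eq[OF e monomial_data_two_point])
  have y0: "y \<noteq> 0" using y e by (metis power_0_left not_one_le_zero zero_neq_one)
  have v': "monomial_data e n (adj_swap j) (two_point (inverse y) j)"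
    using j y e by (intro monomial_data_two_point) (auto simp: power_inverse)
  then show "monomial n (adj_swap j) (two_point (inverse y) j) \<in> Geen e n"
    using Geen_iff_monomial[OF e] by blast
  have "mmult n (monomial n (adj_swap j) (two_point y (Suc j))) (monomial n (adj_swap j) (two_point (inverse y) j))
      = monomial n (adj_swap j \<circ> adj_swap j) (\<lambda>i. two_point y (Suc j) i * two_point (inverse y) j (adj_swap j i))"
    using j by (intro mmult_monomial) (auto simp: adj_swap_def)
  also have "\<dots> = mone n"
    unfolding mone_eq_monomial using j y0 by (intro monomial_cong) (auto simp: two_point_def adj_swap_def)
  finally show "mmult n (monomial n (adj_swap j) (two_point y (Suc j)))
      (monomial n (adj_swap j) (two_point (inverse y) j)) = mone n" .
qed (use e j y in auto)

lemma wlen_two_point_swap_mult_diagonal: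
  assumes e: "e \<ge> 2" and n: "n \<ge> 2" and vc: "monomial_data e n id c"
    and nontriv: "\<forall>b\<in>{2..n}. c b \<noteq> 1" and j: "2 \<le> j" "Suc j \<le> n"
  shows "wlen e n (mmult n (monomial n (adj_swap j) (two_point (inverse (c (Suc j))) j)) (monomial n id c))
      + 2 * j = n * (n - 1) + 1"
proof -
  define y where "y = c (Suc j)"
  define c' where "c' = (\<lambda>i. two_point (inverse y) j i * c (adj_swap j i))"
  define R where "R = row_pairs n"
  define B where "B = insert (j, Suc j) {p \<in> R. snd p = j}"
  have y0: "y \<noteq> 0" using monomial_data_nonzero[OF vc, of "Suc j"] e j by (simp add: y_def)
  have vj: "monomial_data e n (adj_swap j) (two_point (inverse y) j)"
    using e j vc by (intro monomial_data_two_point) (auto simp: monomial_data_def power_inverse y_def)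
  have "mmult n (monomial n (adj_swap j) (two_point (inverse y) j)) (monomial n id c) = monomial n (adj_swap j) c'"
    unfolding c'_def using mmult_monomial[OF monomial_data_range[OF vj], where \<tau>=id and d=c] by simp
  moreover have "monomial_data e n (adj_swap j) c'"
    using monomial_data_mult[OF vj vc] by (simp add: c'_def)
  moreover have "{p \<in> R. c' (snd p) \<noteq> 1} - {(j, Suc j)} = R - B"
    using nontriv j y0 by (auto simp: R_def B_def row_pairs_def c'_def two_point_def adj_swap_def y_def)
  moreover have "card B = j"
    using card_row_pairs_snd[of j n] j by (simp add: B_def R_def)
  moreover have "B \<subseteq> R" using j by (auto simp: B_def R_def row_pairs_def)
  moreover have "card B \<le> card R" using \<open>B \<subseteq> R\<close> by (intro card_mono) (simp_all add: R_def)
  ultimately show ?thesis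
    using wlen_monomial[OF e n] mono_len_adj_swap_eq[of j n c'] j card_row_pairs[of n]
    by (simp add: y_def R_def card_Diff_subset finite_subset)
qed

lemma wlen_diagonal_mult_two_point_swap:
  assumes e: "e \<ge> 2" and n: "n \<ge> 2" and vc: "monomial_data e n id c"
    and nontriv: "\<forall>b\<in>{2..n}. c b \<noteq> 1" and j: "2 \<le> j" "Suc j \<le> n" and ne: "c j \<noteq> c (Suc j)"
  shows "wlen e n (mmult n (monomial n id c) (monomial n (adj_swap j) (two_point (inverse (c (Suc j))) j)))
      + 1 = n * (n - 1)"
proof -
  define y where "y = c (Suc j)"
  define c' where "c' = (\<lambda>i. c i * two_point (inverse y) j i)"
  have y0: "y \<noteq> 0" using monomial_data_nonzero[OF vc, of "Suc j"] e j by (simp add: y_def)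
  have vj: "monomial_data e n (adj_swap j) (two_point (inverse y) j)"
    using e j vc by (intro monomial_data_two_point) (auto simp: monomial_data_def power_inverse y_def)
  have "mmult n (monomial n id c) (monomial n (adj_swap j) (two_point (inverse y) j)) = monomial n (adj_swap j) c'"
    unfolding c'_def using mmult_monomial[of n id c "adj_swap j"] by simp
  moreover have "monomial_data e n (adj_swap j) c'"
    using monomial_data_mult[OF vc vj] by (simp add: c'_def)
  moreover have "c j * inverse y \<noteq> 1" using ne y0 by (simp add: y_def field_simps)
  then have "{p \<in> row_pairs n. c' (snd p) \<noteq> 1} = row_pairs n"
    using nontriv j by (auto simp: row_pairs_def c'_def two_point_def)
  moreover have "(j, Suc j) \<in> row_pairs n" using j by (simp add: row_pairs_def)
  then have "card (row_pairs n - {(j, Suc j)}) + 1 = card (row_pairs n)"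
    using card_gt_0_iff[of "row_pairs n"] by (auto simp: card_Diff_singleton)
  ultimately show ?thesis
    using wlen_monomial[OF e n] mono_len_adj_swap_eq[of j n c'] j card_row_pairs[of n]
    by (simp add: y_def)
qed

text \<open>If the coefficients of a diagonal \<open>g\<close> in rows \<open>j\<close> and \<open>j + 1\<close> differ, the monomial matrix
  \<open>u\<close> over \<open>(j j+1)\<close> with coefficients \<open>c (j+1)\<^sup>-\<^sup>1\<close> in row \<open>1\<close> and \<open>c (j+1)\<close> in row \<open>j + 1\<close>
  is a left divisor of \<open>g\<close> but not a right one.\<close>

lemma diagonal_consecutive_coeffs_eq:
  assumes e: "e \<ge> 2" and n: "n \<ge> 2" and vc: "monomial_data e n id c"
    and nontriv: "\<forall>b\<in>{2..n}. c b \<noteq> 1" and bal: "balanced e n (monomial n id c)"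
    and j: "2 \<le> j" "Suc j \<le> n"
  shows "c j = c (Suc j)"
proof (rule ccontr)
  assume ne: "c j \<noteq> c (Suc j)"
  have e1: "e \<ge> 1" using e by simp
  define u where "u = monomial n (adj_swap j) (two_point (c (Suc j)) (Suc j))"
  have y: "c (Suc j) ^ e = 1" "c (Suc j) \<noteq> 1" using vc nontriv j by (auto simp: monomial_data_def)
  have "monomial_data e n (adj_swap j) (two_point (c (Suc j)) (Suc j))"
    using e1 j y by (intro monomial_data_two_point) auto
  then have "u \<in> Geen e n" using Geen_iff_monomial[OF e1] by (auto simp: u_def)
  have ginv_u: "ginv e n u = monomial n (adj_swap j) (two_point (inverse (c (Suc j))) j)"
    unfolding u_def using ginv_two_point_swap[OF e1 j y(1)] .
  have len_u: "wlen e n u = 2 * j - 1"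
    unfolding u_def using wlen_two_point_swap[OF e n _ j(2) y] j by simp
  have len_g: "wlen e n (monomial n id c) = n * (n - 1)"
    by (rule wlen_diagonal_max[OF e n vc nontriv])
  have "u \<in> interval_l e n (monomial n id c)"
    using \<open>u \<in> Geen e n\<close> len_u len_g wlen_two_point_swap_mult_diagonal[OF e n vc nontriv j] j
    by (auto simp: interval_l_def prefix_le_def ginv_u)
  moreover have "u \<notin> interval_r e n (monomial n id c)"
    using len_u len_g wlen_diagonal_mult_two_point_swap[OF e n vc nontriv j ne] j
    by (auto simp: interval_r_def suffix_le_def ginv_u)
  ultimately show False using bal by (simp add: balanced_def)
qed

lemma diagonal_coeffs_eq_lam_pow:
  assumes e: "e \<ge> 1" and n: "n \<ge> 2" and v: "monomial_data e n id c" and c2: "c 2 \<noteq> 1"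
    and step: "\<And>j. 2 \<le> j \<Longrightarrow> Suc j \<le> n \<Longrightarrow> c j = c (Suc j)"
  shows "\<exists>k. 1 \<le> k \<and> k \<le> e - 1 \<and> monomial n id c = mpow n (lam e n) k"
proof -
  have const: "c i = c 2" if "2 \<le> i" "i \<le> n" for i
    using that
  proof (induction i rule: nat_induct_at_least)
    case (Suc i)
    then show ?case using step[of i] by simp
  qed simp
  have "c 2 ^ e = 1" using v n by (simp add: monomial_data_def)
  then obtain k where k: "k < e" "c 2 = zeta e ^ k" using root_of_unity_eq_zeta_pow[OF e] by blast
  have "k \<noteq> 0"
  proof
    assume "k = 0"
    then show False using k(2) c2 by simp
  qed
  have ck: "c i = zeta e ^ k" if "i \<in> {2..n}" for i
    using const[of i] that k(2) by simp
  then have "(\<Prod>i\<in>{2..n}. c i) = (zeta e ^ k) ^ (n - 1)" by simp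
  then have "(\<Prod>i\<in>{1..n}. c i) = c 1 * (zeta e ^ k) ^ (n - 1)"
    using n by (simp add: prod.atLeast_Suc_atMost numeral_2_eq_2)
  then have "c 1 * (zeta e ^ k) ^ (n - 1) = 1" using v by (simp add: monomial_data_def)
  then have "c 1 = inverse ((zeta e ^ k) ^ (n - 1))"
    using inverse_unique[of "(zeta e ^ k) ^ (n - 1)" "c 1"] by (simp add: mult.commute)
  also have "\<dots> = inverse (zeta e ^ (n - 1)) ^ k"
    by (simp add: power_inverse mult.commute flip: power_mult)
  finally have "c 1 = inverse (zeta e ^ (n - 1)) ^ k" .
  then have "\<forall>i\<in>{1..n}. id i = id i \<and> c i = lam_coeffs e n k i"
    using ck by (auto simp: lam_coeffs_def)
  then have "monomial n id c = monomial n id (lam_coeffs e n k)" by (rule monomial_cong)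
  then show ?thesis
    using mpow_lam_eq_monomial[of n e k] n k(1) \<open>k \<noteq> 0\<close> by (intro exI[of _ k]) auto
qed

theorem mainTheorem6:
  fixes e n :: nat and g :: cmat
  assumes "e \<ge> 2" and "n \<ge> 2" and "g \<in> Geen e n"
  shows "(balanced e n g \<and> wlen e n g = n * (n - 1)) \<longleftrightarrow>
         (\<exists>k. 1 \<le> k \<and> k \<le> e - 1 \<and> g = mpow n (lam e n) k)"
proof
  assume bal_max: "balanced e n g \<and> wlen e n g = n * (n - 1)"
  obtain \<sigma> c where v: "monomial_data e n \<sigma> c" and g: "g = monomial n \<sigma> c"
    using assms(3) Geen_iff_monomial[of e] assms(1) by auto
  have "mono_len n \<sigma> c = n * (n - 1)" using bal_max wlen_monomial[OF assms(1,2) v] g by simp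
  note diagonal = max_len_imp_diagonal[OF v this]
  then have diag: "\<forall>i\<in>{1..n}. \<sigma> i = id i \<and> c i = c i" by simp
  have vid: "monomial_data e n id c" using monomial_data_cong[OF v diag] .
  have gid: "g = monomial n id c" unfolding g by (rule monomial_cong[OF diag])
  show "\<exists>k. 1 \<le> k \<and> k \<le> e - 1 \<and> g = mpow n (lam e n) k"
    unfolding gid
  proof (rule diagonal_coeffs_eq_lam_pow[OF _ assms(2) vid])
    show "c 2 \<noteq> 1" using diagonal(2) assms(2) by simp
    show "c j = c (Suc j)" if "2 \<le> j" "Suc j \<le> n" for j
      using diagonal_consecutive_coeffs_eq[OF assms(1,2) vid diagonal(2)] bal_max gid that by simp
  qed (use assms(1) in simp)
next
  assume "\<exists>k. 1 \<le> k \<and> k \<le> e - 1 \<and> g = mpow n (lam e n) k"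
  then show "balanced e n g \<and> wlen e n g = n * (n - 1)"
    using lam_pow_balanced_max_len[OF assms(1,2)] by blast
qed

end
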